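(* Let $d\ge2$, let $\Omega\subset\mathbb R^d$ be a nonempty bounded open convex polytope, and let $E\subset\mathbb R^d$ carry a Borel probability measure $\mu$ such that $(E,\mu)$ is weakly incoming to $\Omega$. Let $x_0\in\overline\Omega$. Then there exist $r_0>0$, $\epsilon>0$, a measurable $F\subset E$ with $\mu(F)>0$ and $\theta\in\{\pm1\}$ such that for all $f\in F$, all $x\in B(x_0,r_0)\cap\Omega$ and all $t\in[0,\epsilon]$, $x+t\theta f\in\Omega$.
   Context: $\Omega=\{x\in\mathbb R^d:\ \ell_j(x)>b_j,\ j=1,\dots,m\}$ for linear forms $\ell_j$ and reals $b_j$. Define $\mathrm c(x)=0$ for $x\in\Omega$, $+\infty$ for $x\notin\overline\Omega$, $\#\{i:\ell_i(x)=b_i\}$ for $x\in\partial\Omega$. $(E,\mu)$ is weakly incoming to $\Omega$ if for every $x_0\in\partial\Omega$ there exist $\epsilon>0$, $\theta\in\{\pm1\}$ and a measurable $F\subset E$ with $\mu(F)>0$ such that $\mathrm c(x_0+\theta te)<\mathrm c(x_0)$ for all $t\in]0,\epsilon]$, $e\in F$. $B(x_0,r)$ is the open ball. *)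

theory Defs
  imports "HOL-Probability.Probability"
begin

text \<open>The polytope given by m strict linear inequalities  a j \<bullet> x > b j  (j < m);
  the linear form l_j is represented by its gradient vector a j.\<close>
definition polyset :: "nat \<Rightarrow> (nat \<Rightarrow> 'a::euclidean_space) \<Rightarrow> (nat \<Rightarrow> real) \<Rightarrow> 'a set" where
  "polyset m a b = {x. \<forall>j<m. a j \<bullet> x > b j}"

definition cfun :: "nat \<Rightarrow> (nat \<Rightarrow> 'a::euclidean_space) \<Rightarrow> (nat \<Rightarrow> real) \<Rightarrow> 'a \<Rightarrow> enat" where
  "cfun m a b x =
     (if x \<in> polyset m a b then 0
      else if x \<notin> closure (polyset m a b) then \<infinity>
      else enat (card {i. i < m \<and> a i \<bullet> x = b i}))"

definition weakly_incoming ::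
  "nat \<Rightarrow> (nat \<Rightarrow> 'a::euclidean_space) \<Rightarrow> (nat \<Rightarrow> real) \<Rightarrow> 'a set \<Rightarrow> 'a measure \<Rightarrow> bool" where
  "weakly_incoming m a b E \<mu> \<longleftrightarrow>
     (\<forall>x0 \<in> frontier (polyset m a b). \<exists>\<epsilon>>0. \<exists>\<theta>\<in>{-1, 1::real}. \<exists>F \<in> sets \<mu>.
        F \<subseteq> E \<and> measure \<mu> F > 0 \<and>
        (\<forall>t\<in>{0<..\<epsilon>}. \<forall>e\<in>F. cfun m a b (x0 + (\<theta> * t) *\<^sub>R e) < cfun m a b x0))"

end

theory Submission
  imports Defs
begin

text \<open>Near a point of the closed polytope only the active constraints matter: each inactive
  constraint has positive slack, so it survives small displacements of the point and small
  moves along bounded directions. Hence it suffices to find a set \<open>F\<close> of positive measure and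
  a sign \<open>\<theta>\<close> such that \<open>\<theta> e\<close> does not decrease any active constraint for \<open>e \<in> F\<close>, and to cut
  \<open>F\<close> down to a bounded part that still has positive measure. At a boundary point such \<open>F\<close>
  and \<open>\<theta>\<close> come from weak incomingness: moving along \<open>\<theta> e\<close> keeps \<open>c\<close> finite, so the point stays
  in the closure and no active constraint can decrease. At an interior point nothing is active
  and \<open>F = E\<close> will do.\<close>

lemma open_polyset: "open (polyset m a b)"
proof -
  have "polyset m a b = (\<Inter>j<m. {x. a j \<bullet> x > b j})"
    unfolding polyset_def by auto
  thus ?thesis by (auto intro!: open_INT open_halfspace_gt)
qed

lemma closure_polyset_subset: "closure (polyset m a b) \<subseteq> {x. \<forall>j<m. b j \<le> a j \<bullet> x}"
proof (rule closure_minimal)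
  show "polyset m a b \<subseteq> {x. \<forall>j<m. b j \<le> a j \<bullet> x}"
    unfolding polyset_def by (auto simp: less_imp_le)
  have "{x. \<forall>j<m. b j \<le> a j \<bullet> x} = (\<Inter>j<m. {x. a j \<bullet> x \<ge> b j})" by auto
  thus "closed {x. \<forall>j<m. b j \<le> a j \<bullet> x}" by (auto intro!: closed_INT closed_halfspace_ge)
qed

lemma cfun_less_imp_in_closure:
  assumes "cfun m a b y < cfun m a b x"
  shows "y \<in> closure (polyset m a b)"
  using assms closure_subset[of "polyset m a b"] unfolding cfun_def by (auto split: if_splits)

lemma eventually_halfspace_stable:
  fixes a x0 :: "'a::real_inner"
  assumes "\<beta> < a \<bullet> x0"
  shows "\<forall>\<^sub>F r in at_right 0. \<forall>x\<in>ball x0 r. \<forall>t\<in>{0..r}. \<forall>e\<in>cball 0 R. \<beta> < a \<bullet> (x + t *\<^sub>R e)"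
  unfolding eventually_at_right_field
proof (intro exI conjI allI impI ballI)
  define K where "K = norm a * (1 + \<bar>R\<bar>) + 1"
  have K: "K > 0" unfolding K_def by (simp add: add_nonneg_pos)
  show "(a \<bullet> x0 - \<beta>) / K > 0" using K assms by simp
  fix r x t and e :: 'a
  assume r: "0 < r" "r < (a \<bullet> x0 - \<beta>) / K" and x: "x \<in> ball x0 r" and t: "t \<in> {0..r}"
    and e: "e \<in> cball 0 R"
  have "\<bar>a \<bullet> (x - x0)\<bar> \<le> norm a * r"
    using Cauchy_Schwarz_ineq2[of a "x - x0"] mult_left_mono[of "norm (x - x0)" r "norm a"] x
    by (simp add: dist_norm norm_minus_commute)
  moreover have "\<bar>t * (a \<bullet> e)\<bar> \<le> r * (norm a * \<bar>R\<bar>)"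
  proof -
    have "\<bar>a \<bullet> e\<bar> \<le> norm a * \<bar>R\<bar>"
      using Cauchy_Schwarz_ineq2[of a e] mult_left_mono[of "norm e" "\<bar>R\<bar>" "norm a"] e by force
    thus ?thesis using t by (simp add: abs_mult mult_mono)
  qed
  moreover have "r * K = norm a * r + r * (norm a * \<bar>R\<bar>) + r"
    unfolding K_def by (simp add: algebra_simps)
  moreover have "r * K < a \<bullet> x0 - \<beta>" using r K by (simp add: pos_less_divide_eq)
  moreover have "a \<bullet> (x + t *\<^sub>R e) = a \<bullet> x0 + a \<bullet> (x - x0) + t * (a \<bullet> e)"
    by (simp add: inner_add_right inner_diff_right)
  ultimately show "\<beta> < a \<bullet> (x + t *\<^sub>R e)"
    using r(1) by (simp only: abs_le_iff) linarith
qed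

lemma polyset_stable_along_directions:
  assumes x0: "x0 \<in> closure (polyset m a b)" and D: "D \<subseteq> cball 0 R"
    and active: "\<And>e i. e \<in> D \<Longrightarrow> i < m \<Longrightarrow> a i \<bullet> x0 = b i \<Longrightarrow> 0 \<le> a i \<bullet> e"
  shows "\<exists>r>0. \<forall>e\<in>D. \<forall>x\<in>ball x0 r \<inter> polyset m a b. \<forall>t\<in>{0..r}. x + t *\<^sub>R e \<in> polyset m a b"
proof -
  let ?I = "{i. i < m \<and> a i \<bullet> x0 \<noteq> b i}"
  have slack: "b i < a i \<bullet> x0" if "i \<in> ?I" for i
    using that x0 closure_polyset_subset[of m a b] by force
  have "\<forall>\<^sub>F r in at_right 0. 0 < r \<and>
          (\<forall>i\<in>?I. \<forall>x\<in>ball x0 r. \<forall>t\<in>{0..r}. \<forall>e\<in>cball 0 R. b i < a i \<bullet> (x + t *\<^sub>R e))"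
    by (intro eventually_conj eventually_at_right_less eventually_ball_finite ballI
          eventually_halfspace_stable slack) auto
  then obtain r where r: "0 < r"
    and inactive: "\<And>i x t e. i \<in> ?I \<Longrightarrow> x \<in> ball x0 r \<Longrightarrow> t \<in> {0..r} \<Longrightarrow> e \<in> cball 0 R \<Longrightarrow>
                     b i < a i \<bullet> (x + t *\<^sub>R e)"
    using eventually_happens'[OF trivial_limit_at_right_real] by blast
  have "x + t *\<^sub>R e \<in> polyset m a b"
    if e: "e \<in> D" and x: "x \<in> ball x0 r \<inter> polyset m a b" and t: "t \<in> {0..r}" for e x t
    unfolding polyset_def
  proof (intro CollectI allI impI)
    fix j assume j: "j < m"
    show "b j < a j \<bullet> (x + t *\<^sub>R e)"
    proof (cases "a j \<bullet> x0 = b j")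
      case True
      have "b j < a j \<bullet> x" using x j unfolding polyset_def by auto
      moreover have "0 \<le> t * (a j \<bullet> e)" using active[OF e j True] t by simp
      ultimately show ?thesis by (simp add: inner_add_right)
    next
      case False
      thus ?thesis using inactive[of j x t e] j x t e D by auto
    qed
  qed
  thus ?thesis using r by blast
qed

lemma weakly_incoming_frontier_direction:
  assumes "weakly_incoming m a b E \<mu>" and "x0 \<in> frontier (polyset m a b)"
  shows "\<exists>\<theta>\<in>{-1, 1}. \<exists>F\<in>sets \<mu>. F \<subseteq> E \<and> measure \<mu> F > 0 \<and>
           (\<forall>e\<in>F. \<forall>i<m. a i \<bullet> x0 = b i \<longrightarrow> 0 \<le> a i \<bullet> (\<theta> *\<^sub>R e))"
proof -
  obtain \<epsilon> \<theta> F where \<epsilon>: "\<epsilon> > 0" and \<theta>: "\<theta> \<in> {-1, 1}" and F: "F \<in> sets \<mu>" "F \<subseteq> E"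
      "measure \<mu> F > 0"
    and decrease: "\<And>e. e \<in> F \<Longrightarrow> cfun m a b (x0 + (\<theta> * \<epsilon>) *\<^sub>R e) < cfun m a b x0"
    using assms unfolding weakly_incoming_def by fastforce
  have "0 \<le> a i \<bullet> (\<theta> *\<^sub>R e)" if e: "e \<in> F" and i: "i < m" "a i \<bullet> x0 = b i" for e i
  proof -
    have "x0 + (\<theta> * \<epsilon>) *\<^sub>R e \<in> closure (polyset m a b)"
      by (rule cfun_less_imp_in_closure[OF decrease[OF e]])
    hence "b i \<le> a i \<bullet> (x0 + \<epsilon> *\<^sub>R (\<theta> *\<^sub>R e))"
      using closure_polyset_subset[of m a b] i(1) by (force simp: mult.commute)
    hence "0 \<le> \<epsilon> * (a i \<bullet> (\<theta> *\<^sub>R e))" using i(2) by (simp add: inner_add_right)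
    thus ?thesis using \<epsilon> by (simp add: zero_le_mult_iff)
  qed
  thus ?thesis using \<theta> F by blast
qed

lemma weakly_incoming_closure_direction:
  assumes "prob_space \<mu>" and sets: "sets \<mu> = sets (restrict_space borel E)"
    and "weakly_incoming m a b E \<mu>" and x0: "x0 \<in> closure (polyset m a b)"
  shows "\<exists>\<theta>\<in>{-1, 1}. \<exists>F\<in>sets \<mu>. F \<subseteq> E \<and> measure \<mu> F > 0 \<and>
           (\<forall>e\<in>F. \<forall>i<m. a i \<bullet> x0 = b i \<longrightarrow> 0 \<le> a i \<bullet> (\<theta> *\<^sub>R e))"
proof (cases "x0 \<in> polyset m a b")
  case True
  interpret prob_space \<mu> by fact
  have "space \<mu> = E" using sets_eq_imp_space_eq[OF sets] by (simp add: space_restrict_space)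
  hence "E \<in> sets \<mu>" "measure \<mu> E > 0" using prob_space by auto
  moreover have "a i \<bullet> x0 \<noteq> b i" if "i < m" for i
    using True that unfolding polyset_def by force
  ultimately show ?thesis by blast
next
  case False
  hence "x0 \<in> frontier (polyset m a b)"
    using x0 open_polyset[of m a b] by (simp add: frontier_def interior_open)
  thus ?thesis using weakly_incoming_frontier_direction assms(3) by blast
qed

lemma finite_measure_bounded_part_positive:
  fixes F :: "'a::real_normed_vector set"
  assumes "finite_measure M" and meas: "\<And>R. F \<inter> cball 0 R \<in> sets M" and pos: "measure M F > 0"
  shows "\<exists>R. measure M (F \<inter> cball 0 R) > 0"
proof -
  interpret finite_measure M by fact
  have "(\<Union>n. F \<inter> cball 0 (real n)) = F"
    using real_arch_simple by (auto simp: mem_cball_0)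
  hence "(\<lambda>n. measure M (F \<inter> cball 0 (real n))) \<longlonglongrightarrow> measure M F"
    using finite_Lim_measure_incseq[of "\<lambda>n. F \<inter> cball 0 (real n)"] meas
    by (force simp: incseq_def subset_cball)
  then obtain n where "measure M (F \<inter> cball 0 (real n)) > 0"
    using order_tendstoD(1)[OF _ pos] eventually_happens'[OF sequentially_bot] by blast
  thus ?thesis by blast
qed

theorem corollary5p5:
  fixes a :: "nat \<Rightarrow> 'a::euclidean_space" and b :: "nat \<Rightarrow> real" and m :: nat
    and E :: "'a set" and \<mu> :: "'a measure" and x0 :: 'a
  assumes "DIM('a) \<ge> 2"
    and "polyset m a b \<noteq> {}"
    and "bounded (polyset m a b)"
    and "prob_space \<mu>"
    and "sets \<mu> = sets (restrict_space borel E)"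
    and "weakly_incoming m a b E \<mu>"
    and "x0 \<in> closure (polyset m a b)"
  shows "\<exists>r0>0. \<exists>\<epsilon>>0. \<exists>F \<in> sets \<mu>. F \<subseteq> E \<and> measure \<mu> F > 0 \<and>
           (\<exists>\<theta>\<in>{-1, 1::real}. \<forall>f\<in>F. \<forall>x \<in> ball x0 r0 \<inter> polyset m a b.
              \<forall>t\<in>{0..\<epsilon>}. x + (t * \<theta>) *\<^sub>R f \<in> polyset m a b)"
proof -
  obtain \<theta> F where \<theta>: "\<theta> \<in> {-1, 1}" and F: "F \<in> sets \<mu>" "F \<subseteq> E" "measure \<mu> F > 0"
    and active: "\<forall>e\<in>F. \<forall>i<m. a i \<bullet> x0 = b i \<longrightarrow> 0 \<le> a i \<bullet> (\<theta> *\<^sub>R e)"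
    using weakly_incoming_closure_direction[OF assms(4-7)] by blast
  have meas: "F \<inter> cball 0 R \<in> sets \<mu>" for R
  proof -
    have "E \<inter> cball 0 R \<in> sets \<mu>" using assms(5) by (auto simp: sets_restrict_space)
    moreover have "F \<inter> cball 0 R = F \<inter> (E \<inter> cball 0 R)" using F(2) by blast
    ultimately show ?thesis using F(1) by auto
  qed
  obtain R where R: "measure \<mu> (F \<inter> cball 0 R) > 0"
    using finite_measure_bounded_part_positive[OF _ meas F(3)] assms(4)
    by (auto simp: prob_space_def)
  define D where "D = (\<lambda>e. \<theta> *\<^sub>R e) ` (F \<inter> cball 0 R)"
  have "D \<subseteq> cball 0 R" using \<theta> unfolding D_def by auto
  moreover have "0 \<le> a i \<bullet> d" if "d \<in> D" "i < m" "a i \<bullet> x0 = b i" for d i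
    using that active unfolding D_def by blast
  ultimately obtain r where r: "r > 0" and stable: "\<forall>d\<in>D.
      \<forall>x\<in>ball x0 r \<inter> polyset m a b. \<forall>t\<in>{0..r}. x + t *\<^sub>R d \<in> polyset m a b"
    using polyset_stable_along_directions[OF assms(7)] by metis
  have "\<forall>f\<in>F \<inter> cball 0 R. \<forall>x\<in>ball x0 r \<inter> polyset m a b. \<forall>t\<in>{0..r}.
          x + (t * \<theta>) *\<^sub>R f \<in> polyset m a b"
    using stable unfolding D_def by simp
  moreover have "F \<inter> cball 0 R \<subseteq> E" using F(2) by blast
  ultimately show ?thesis using r meas R \<theta>
    by (intro exI[of _ r] conjI bexI[of _ "F \<inter> cball 0 R"] bexI[of _ \<theta>])
qed

end
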